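(* Let $(\Omega,\mathcal{A},\pi)$ and $(\Omega',\mathcal{A}',\pi')$ be probability spaces, let $\tau:\Omega\to\Omega'$ be a measure preserving map, and let $W$ be a $\mathcal{Z}$-graphon on $(\Omega,\mathcal{A},\pi)$. (i) There exists a strong $\mathcal{Z}$-graphon $W_\tau$ on $(\Omega',\mathcal{A}',\pi')$ such that for all $A_1',A_2'\in\mathcal{A}'$ and all $\varphi\in\Phi$, \[ \int_{A_1'\times A_2'}\langle\varphi,W_\tau(x',y')\rangle\,d\pi'(x')d\pi'(y')=\int_{\tau^{-1}(A_1')\times\tau^{-1}(A_2')}\langle\varphi,W(x,y)\rangle\,d\pi(x)d\pi(y). \] (ii) If $\tau$ is an embedding, then $(W_\tau)^\tau=W$ almost everywhere, where $(W_\tau)^\tau(x,y):=W_\tau(\tau(x),\tau(y))$.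
   Context: $\Phi$ is a separable real Banach space, $\mathcal{Z}=\Phi^*$, $\langle\varphi,z\rangle=z(\varphi)$. A $\mathcal{Z}$-graphon on $(\Omega,\mathcal{A},\pi)$ is a symmetric function $W:\Omega^2\to\mathcal{Z}$ such that each $(x,y)\mapsto\langle\varphi,W(x,y)\rangle$ ($\varphi\in\Phi$) is measurable w.r.t. the completion $\overline{\mathcal{A}\times\mathcal{A}}$ and $(x,y)\mapsto\|W(x,y)\|_{\mathcal{Z}}$ lies in $L^p(\pi\times\pi)$ for all $1\le p<\infty$; it is strong if each $\langle\varphi,W\rangle$ is $\mathcal{A}\times\mathcal{A}$-measurable. A map $\tau$ is measure preserving if it is measurable and $\pi(\tau^{-1}(A'))=\pi'(A')$ for all $A'\in\mathcal{A}'$. A probability space $(\Omega'',\mathcal{A}'',\pi'')$ is a full subspace of $(\Omega',\mathcal{A}',\pi')$ if $\Omega''\subset\Omega'$ has outer measure $1$, $\mathcal{A}''=\{A\cap\Omega'':A\in\mathcal{A}'\}$ and $\pi''(A\cap\Omega'')=\pi'(A)$. A measure preserving $\tau$ is an embedding if it is an isomorphism (bijective, with measurable measure preserving inverse) between $(\Omega,\mathcal{A},\pi)$ and a full subspace of $(\Omega',\mathcal{A}',\pi')$. *)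

theory Defs
  imports "HOL-Probability.Probability"
begin

(* Phi is modelled by a type 'p of class banach + second_countable_topology
(separable real Banach space); Z = Phi* is the type 'p \<Rightarrow>\<^sub>L real of bounded
linear functionals, with the pairing \<langle>phi, z\<rangle> = blinfun_apply z phi. *)

definition meas_pres :: "'a measure \<Rightarrow> 'b measure \<Rightarrow> ('a \<Rightarrow> 'b) \<Rightarrow> bool" where
  "meas_pres M M' \<tau> \<longleftrightarrow> \<tau> \<in> measurable M M' \<and>
     (\<forall>A'\<in>sets M'. emeasure M (\<tau> -` A' \<inter> space M) = emeasure M' A')"

definition Zgraphon :: "'a measure \<Rightarrow> ('a \<Rightarrow> 'a \<Rightarrow> ('p::{banach,second_countable_topology} \<Rightarrow>\<^sub>L real)) \<Rightarrow> bool" where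
  "Zgraphon M W \<longleftrightarrow>
     (\<forall>x\<in>space M. \<forall>y\<in>space M. W x y = W y x) \<and>
     (\<forall>\<phi>. (\<lambda>z. blinfun_apply (W (fst z) (snd z)) \<phi>) \<in> borel_measurable (completion (M \<Otimes>\<^sub>M M))) \<and>
     (\<lambda>z. norm (W (fst z) (snd z))) \<in> borel_measurable (completion (M \<Otimes>\<^sub>M M)) \<and>
     (\<forall>p::real. 1 \<le> p \<longrightarrow> integrable (completion (M \<Otimes>\<^sub>M M)) (\<lambda>z. norm (W (fst z) (snd z)) powr p))"

definition strong_Zgraphon :: "'a measure \<Rightarrow> ('a \<Rightarrow> 'a \<Rightarrow> ('p::{banach,second_countable_topology} \<Rightarrow>\<^sub>L real)) \<Rightarrow> bool" where
  "strong_Zgraphon M W \<longleftrightarrow> Zgraphon M W \<and>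
     (\<forall>\<phi>. (\<lambda>z. blinfun_apply (W (fst z) (snd z)) \<phi>) \<in> borel_measurable (M \<Otimes>\<^sub>M M))"

(* S is (the carrier of) a full subspace of M': S \<subseteq> space M' has outer measure 1,
i.e. every measurable superset of S has measure 1 (M' is a probability space).
The full subspace has sigma algebra {A \<inter> S | A \<in> sets M'} and measure (A \<inter> S) \<mapsto> measure of A. *)
definition full_subspace :: "'b measure \<Rightarrow> 'b set \<Rightarrow> bool" where
  "full_subspace M' S \<longleftrightarrow> S \<subseteq> space M' \<and> (\<forall>A\<in>sets M'. S \<subseteq> A \<longrightarrow> emeasure M' A = 1)"

(* Embedding: measure preserving, and an isomorphism onto a full subspace S.
Given that tau is measure preserving into M', tau is automatically measurable and
measure preserving into the full subspace; bijectivity onto S plus the last clause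
says exactly that the inverse is measurable and measure preserving. *)
definition embedding :: "'a measure \<Rightarrow> 'b measure \<Rightarrow> ('a \<Rightarrow> 'b) \<Rightarrow> bool" where
  "embedding M M' \<tau> \<longleftrightarrow> meas_pres M M' \<tau> \<and>
     (\<exists>S. full_subspace M' S \<and> bij_betw \<tau> (space M) S \<and>
        (\<forall>B\<in>sets M. \<exists>A\<in>sets M'. \<tau> ` B = A \<inter> S \<and> emeasure M B = emeasure M' A))"

end

(*
  For each \<phi>, push the signed measure <\<phi>, W> (\<pi> \<times> \<pi>) forward along \<tau> \<times> \<tau> and take its
  Radon-Nikodym density V\<^sub>\<phi> with respect to \<pi>' \<times> \<pi>'. Linearity in \<phi> and the bound
  |<\<phi>, W>| \<le> \<parallel>W\<parallel> \<parallel>\<phi>\<parallel> pass to the densities almost everywhere, simultaneously for all \<phi> in a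
  countable dense set; off one null set, \<phi> \<mapsto> V\<^sub>\<phi> therefore extends to a bounded functional V
  whose norm is dominated by the density g of the pushforward of \<parallel>W\<parallel>. Jensen's inequality
  g\<^sup>p \<le> (density of the pushforward of \<parallel>W\<parallel>\<^sup>p) gives the L\<^sup>p bounds, and symmetrizing V gives W\<^sub>\<tau>.
  If \<tau> is an embedding, every measurable subset of \<Omega>\<^sup>2 is a (\<tau> \<times> \<tau>)-preimage up to a null set,
  so V \<circ> (\<tau> \<times> \<tau>) has the same integrals as W over all measurable sets and hence equals W
  almost everywhere.
*)

theory Submission
  imports Defs
begin

section \<open>Functionals determined by their values on a dense set\<close>

lemma ex_countable_dense:
  obtains D :: "'a::{metric_space,second_countable_topology} set"
  where "countable D" "closure D = UNIV"
proof -
  obtain D :: "'a set" where D: "countable D" "\<And>X. open X \<Longrightarrow> X \<noteq> {} \<Longrightarrow> \<exists>d\<in>D. d \<in> X"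
    using countable_dense_setE by blast
  have "x \<in> closure D" for x
    unfolding closure_approachable using D(2)[of "ball x _"] by (fastforce simp: dist_commute)
  with D(1) show thesis by (intro that) auto
qed

lemma bounded_linear_eq_on_dense:
  fixes f g :: "'a::real_normed_vector \<Rightarrow> 'b::real_normed_vector"
  assumes "closure D = UNIV" and "bounded_linear f" "bounded_linear g"
    and "\<And>x. x \<in> D \<Longrightarrow> f x = g x"
  shows "f = g"
proof
  fix x
  have "continuous_on (closure D) (\<lambda>x. f x - g x)"
    using assms(2,3) by (intro linear_continuous_on bounded_linear_sub)
  then have "f x - g x = 0"
    by (rule continuous_constant_on_closure) (use assms in auto)
  then show "f x = g x" by simp
qed

lemma norm_blinfun_div_le:
  fixes L :: "'a::real_normed_vector \<Rightarrow>\<^sub>L 'b::real_normed_vector"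
  shows "norm (L x) / norm x \<le> norm L"
  using norm_blinfun[of L x] by (cases "x = 0") (simp_all add: divide_le_eq)

lemma norm_blinfun_eq_SUP_dense:
  fixes L :: "'a::real_normed_vector \<Rightarrow>\<^sub>L 'b::real_normed_vector"
  assumes dense: "closure D = UNIV"
  shows "norm L = (SUP d\<in>D. norm (L d) / norm d)"
proof -
  have "D \<noteq> {}" using dense by auto
  have bdd: "bdd_above ((\<lambda>d. norm (L d) / norm d) ` D)"
    by (rule bdd_aboveI[of _ "norm L"]) (auto intro: norm_blinfun_div_le)
  define S where "S = (SUP d\<in>D. norm (L d) / norm d)"
  have "0 \<le> S"
    using \<open>D \<noteq> {}\<close> unfolding S_def by (auto intro: cSUP_upper2[OF bdd])
  have "norm (L x) - S * norm x \<le> 0" for x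
  proof (rule continuous_le_on_closure[where S = D])
    show "continuous_on (closure D) (\<lambda>x. norm (L x) - S * norm x)"
      by (intro continuous_intros)
    fix d assume "d \<in> D"
    then have "norm (L d) / norm d \<le> S" unfolding S_def by (rule cSUP_upper[OF _ bdd])
    then show "norm (L d) - S * norm d \<le> 0"
      by (cases "d = 0") (simp_all add: divide_le_eq)
  qed (use dense in auto)
  then have "norm L \<le> S" by (intro norm_blinfun_bound[OF \<open>0 \<le> S\<close>]) simp
  moreover have "S \<le> norm L"
    unfolding S_def using \<open>D \<noteq> {}\<close> by (intro cSUP_least norm_blinfun_div_le)
  ultimately show ?thesis unfolding S_def by simp
qed

lemma borel_measurable_norm_blinfun:
  fixes L :: "'a \<Rightarrow> 'p::{real_normed_vector,second_countable_topology} \<Rightarrow>\<^sub>L real"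
  assumes [measurable]: "\<And>\<phi>. (\<lambda>x. L x \<phi>) \<in> borel_measurable M"
  shows "(\<lambda>x. norm (L x)) \<in> borel_measurable M"
proof -
  obtain D :: "'p set" where D: "countable D" "closure D = UNIV" by (rule ex_countable_dense)
  have "(\<lambda>x. SUP d\<in>D. norm (L x d) / norm d) \<in> borel_measurable M"
  proof (rule borel_measurable_cSUP[OF D(1)])
    fix x
    show "bdd_above ((\<lambda>d. norm (L x d) / norm d) ` D)"
      using norm_blinfun_div_le[of "L x"] by (intro bdd_aboveI[of _ "norm (L x)"]) auto
  qed measurable
  then show ?thesis by (simp only: norm_blinfun_eq_SUP_dense[OF D(2)])
qed

definition rat_lincomb_bounded :: "'a::real_normed_vector set \<Rightarrow> real \<Rightarrow> ('a \<Rightarrow> real) \<Rightarrow> bool" where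
  "rat_lincomb_bounded D C f \<longleftrightarrow> (\<forall>a\<in>D. \<forall>b\<in>D. \<forall>c\<in>D. \<forall>s\<in>\<rat>. \<forall>t\<in>\<rat>.
     \<bar>s * f a + t * f b - f c\<bar> \<le> C * norm (s *\<^sub>R a + t *\<^sub>R b - c))"

lemma blinfun_extension_from_dense:
  fixes f :: "'a::real_normed_vector \<Rightarrow> real"
  assumes dense: "closure D = UNIV" and "0 \<le> C" and "rat_lincomb_bounded D C f"
  shows "\<exists>L. (\<forall>a\<in>D. blinfun_apply L a = f a) \<and> norm L \<le> C"
proof -
  have bound: "\<bar>s * f a + t * f b - f c\<bar> \<le> C * norm (s *\<^sub>R a + t *\<^sub>R b - c)"
    if "a \<in> D" "b \<in> D" "c \<in> D" "s \<in> \<rat>" "t \<in> \<rat>" for a b c s t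
    using assms(3) that by (simp add: rat_lincomb_bounded_def)
  have "C-lipschitz_on D f"
    using \<open>0 \<le> C\<close> bound[of _ _ _ 1 0] by (auto simp: lipschitz_on_def dist_real_def dist_norm)
  then obtain g where g: "C-lipschitz_on UNIV g" "\<And>a. a \<in> D \<Longrightarrow> g a = f a"
    using lipschitz_extend_closure dense by metis
  have cont: "continuous_on UNIV (\<lambda>z. g (k z))" if "continuous_on UNIV k" for k :: "'b::topological_space \<Rightarrow> 'a"
    using continuous_on_compose2[OF lipschitz_on_continuous_on[OF g(1)] that] by simp
  \<comment> \<open>The defining inequality passes from \<open>D\<^sup>3 \<times> \<rat>\<^sup>2\<close> to its closure, which is everything.\<close>
  have ineq: "\<bar>s * g x + t * g y - g w\<bar> \<le> C * norm (s *\<^sub>R x + t *\<^sub>R y - w)" for x y w s t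
  proof -
    let ?h = "\<lambda>(x, y, w, s, t). \<bar>s * g x + t * g y - g w\<bar> - C * norm (s *\<^sub>R x + t *\<^sub>R y - w)"
    have "closure (D \<times> D \<times> D \<times> (\<rat> :: real set) \<times> (\<rat> :: real set)) = UNIV"
      unfolding closure_Times dense Rats_closure_real by simp
    moreover have "continuous_on UNIV ?h"
      unfolding case_prod_beta by (intro continuous_intros cont)
    moreover have "?h (a, b, c, s, t) \<le> 0" if "a \<in> D" "b \<in> D" "c \<in> D" "s \<in> \<rat>" "t \<in> \<rat>" for a b c s t
      using bound[OF that] by (simp add: g(2) that)
    ultimately show ?thesis
      using continuous_le_on_closure[of "D \<times> D \<times> D \<times> \<rat> \<times> \<rat>" ?h "(x, y, w, s, t)" 0] by force
  qed
  have lin: "g (s *\<^sub>R x + t *\<^sub>R y) = s * g x + t * g y" for x y s t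
    using ineq[of s x t y "s *\<^sub>R x + t *\<^sub>R y"] by simp
  have bnd: "norm (g x) \<le> C * norm x" for x
    using ineq[of 0 x 0 x x] by simp
  have "bounded_linear g"
  proof (rule bounded_linear_intro)
    show "g (x + y) = g x + g y" for x y using lin[of 1 x 1 y] by simp
    show "g (r *\<^sub>R x) = r *\<^sub>R g x" for r x using lin[of r x 0 x] by simp
    show "norm (g x) \<le> norm x * C" for x using bnd[of x] by (simp add: mult.commute)
  qed
  then have "blinfun_apply (Blinfun g) = g" by (rule bounded_linear_Blinfun_apply)
  then show ?thesis
    using g(2) bnd \<open>0 \<le> C\<close> by (intro exI[of _ "Blinfun g"]) (auto intro: norm_blinfun_bound)
qed

lemma ex_blinfun_AE_extension:
  fixes f :: "'p::real_normed_vector \<Rightarrow> 'b \<Rightarrow> real" and C :: "'b \<Rightarrow> real"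
  assumes dense: "closure D = UNIV" and f [measurable]: "\<And>a. f a \<in> borel_measurable M"
    and AE_bound: "AE z in M. 0 \<le> C z \<and> rat_lincomb_bounded D (C z) (\<lambda>a. f a z)"
  obtains V :: "'b \<Rightarrow> 'p \<Rightarrow>\<^sub>L real"
  where "\<And>\<phi>. (\<lambda>z. V z \<phi>) \<in> borel_measurable M" "AE z in M. norm (V z) \<le> C z"
    "\<And>a. a \<in> D \<Longrightarrow> AE z in M. V z a = f a z"
proof -
  obtain B where B: "{z \<in> space M. \<not> (0 \<le> C z \<and> rat_lincomb_bounded D (C z) (\<lambda>a. f a z))} \<subseteq> B"
    "emeasure M B = 0" "B \<in> sets M"
    using AE_bound by (rule AE_E)
  define G where "G = space M - B"
  have G [measurable]: "G \<in> sets M" using B(3) by (simp add: G_def)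
  have AE_G: "AE z in M. z \<in> G"
    using B(2,3) by (intro AE_I'[of B]) (auto simp: G_def)
  define V :: "'b \<Rightarrow> 'p \<Rightarrow>\<^sub>L real"
    where "V z = (if z \<in> G then SOME L. (\<forall>a\<in>D. blinfun_apply L a = f a z) \<and> norm L \<le> C z else 0)" for z
  have V_G: "(\<forall>a\<in>D. V z a = f a z) \<and> norm (V z) \<le> C z" if "z \<in> G" for z
  proof -
    have "0 \<le> C z \<and> rat_lincomb_bounded D (C z) (\<lambda>a. f a z)"
      using B(1) that unfolding G_def by blast
    then have "\<exists>L. (\<forall>a\<in>D. blinfun_apply L a = f a z) \<and> norm L \<le> C z"
      by (intro blinfun_extension_from_dense[OF dense]) auto
    from someI_ex[OF this] show ?thesis using that by (simp add: V_def)
  qed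
  have V_D: "V z a = indicator G z * f a z" if "a \<in> D" for z a
    using V_G that by (cases "z \<in> G") (auto simp: V_def)
  show thesis
  proof
    fix \<phi>
    obtain as where as: "\<And>n. as n \<in> D" "as \<longlonglongrightarrow> \<phi>"
      using closure_sequential[of \<phi> D] dense by auto
    show "(\<lambda>z. V z \<phi>) \<in> borel_measurable M"
    proof (rule borel_measurable_LIMSEQ_real)
      show "(\<lambda>n. indicator G z * f (as n) z) \<longlonglongrightarrow> V z \<phi>" for z
        unfolding V_D[OF as(1), symmetric] by (intro tendsto_intros as(2))
    qed measurable
  next
    show "AE z in M. norm (V z) \<le> C z" using AE_G by eventually_elim (use V_G in blast)
  next
    fix a assume a: "a \<in> D"
    show "AE z in M. V z a = f a z" using AE_G by eventually_elim (use V_G a in blast)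
  qed
qed

section \<open>Pushforward densities\<close>

lemma integrable_set_integrable:
  fixes f :: "'a \<Rightarrow> 'b::{banach,second_countable_topology}"
  shows "A \<in> sets M \<Longrightarrow> integrable M f \<Longrightarrow> set_integrable M A f"
  unfolding set_integrable_def by (rule integrable_mult_indicator)

lemma AE_le_if_set_integral_le:
  fixes f g :: "'a \<Rightarrow> real"
  assumes f: "integrable M f" and g: "integrable M g"
    and le: "\<And>A. A \<in> sets M \<Longrightarrow> (\<integral>x\<in>A. f x \<partial>M) \<le> (\<integral>x\<in>A. g x \<partial>M)"
  shows "AE x in M. f x \<le> g x"
proof -
  define A where "A = {x \<in> space M. g x < f x}"
  have A [measurable]: "A \<in> sets M"
    using f g unfolding A_def by measurable
  have "(\<integral>x\<in>A. f x - g x \<partial>M) = (\<integral>x\<in>A. f x \<partial>M) - (\<integral>x\<in>A. g x \<partial>M)"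
    using f g by (intro set_integral_diff integrable_set_integrable A)
  moreover have "0 \<le> (\<integral>x\<in>A. f x - g x \<partial>M)"
    unfolding A_def set_lebesgue_integral_def by (intro integral_nonneg_AE) (auto split: split_indicator)
  ultimately have "(\<integral>x\<in>A. f x - g x \<partial>M) = 0"
    using le[OF A] by linarith
  then have "A \<in> null_sets M"
    using f g by (intro null_if_pos_func_has_zero_int[OF _ A]) (auto simp: A_def)
  then have "AE x in M. x \<notin> A" by (rule AE_not_in)
  with AE_space show ?thesis
    by eventually_elim (auto simp: A_def)
qed

lemma integrable_blinfun_apply:
  fixes L :: "'a \<Rightarrow> 'p::real_normed_vector \<Rightarrow>\<^sub>L real"
  assumes "(\<lambda>x. L x \<phi>) \<in> borel_measurable M" and "integrable M g" and "AE x in M. norm (L x) \<le> g x"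
  shows "integrable M (\<lambda>x. L x \<phi>)"
proof (rule Bochner_Integration.integrable_bound)
  show "integrable M (\<lambda>x. g x * norm \<phi>)" using assms(2) by simp
  show "AE x in M. norm (L x \<phi>) \<le> norm (g x * norm \<phi>)"
    using assms(3)
  proof eventually_elim
    case (elim x)
    have "norm (L x \<phi>) \<le> norm (L x) * norm \<phi>" by (rule norm_blinfun)
    also have "\<dots> \<le> g x * norm \<phi>" using elim by (intro mult_right_mono) auto
    finally show ?case by simp
  qed
qed fact

lemma bounded_linear_set_integral_blinfun_apply:
  fixes L :: "'a \<Rightarrow> 'p::real_normed_vector \<Rightarrow>\<^sub>L real"
  assumes L: "\<And>\<phi>. (\<lambda>x. L x \<phi>) \<in> borel_measurable M" and g: "integrable M g"
    and bound: "AE x in M. norm (L x) \<le> g x" and A: "A \<in> sets M"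
  shows "bounded_linear (\<lambda>\<phi>. \<integral>x\<in>A. L x \<phi> \<partial>M)"
proof (rule bounded_linear_intro)
  have si: "set_integrable M A (\<lambda>x. L x \<phi>)" for \<phi>
    by (intro integrable_set_integrable A integrable_blinfun_apply[OF L g bound])
  show "(\<integral>x\<in>A. L x (\<phi> + \<psi>) \<partial>M) = (\<integral>x\<in>A. L x \<phi> \<partial>M) + (\<integral>x\<in>A. L x \<psi> \<partial>M)" for \<phi> \<psi>
    using si by (simp add: blinfun.add_right)
  show "(\<integral>x\<in>A. L x (r *\<^sub>R \<phi>) \<partial>M) = r *\<^sub>R (\<integral>x\<in>A. L x \<phi> \<partial>M)" for r \<phi>
    by (simp add: blinfun.scaleR_right)
  show "norm (\<integral>x\<in>A. L x \<phi> \<partial>M) \<le> norm \<phi> * (\<integral>x. \<bar>g x\<bar> \<partial>M)" for \<phi>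
  proof -
    have "norm (\<integral>x\<in>A. L x \<phi> \<partial>M) \<le> (\<integral>x. norm (indicator A x * L x \<phi>) \<partial>M)"
      using integral_norm_bound unfolding set_lebesgue_integral_def by simp
    also have "\<dots> \<le> (\<integral>x. norm \<phi> * \<bar>g x\<bar> \<partial>M)"
    proof (rule integral_mono_AE)
      show "integrable M (\<lambda>x. norm (indicator A x * L x \<phi>))"
        using si unfolding set_integrable_def by simp
      show "AE x in M. norm (indicator A x * L x \<phi>) \<le> norm \<phi> * \<bar>g x\<bar>"
        using bound
      proof eventually_elim
        case (elim x)
        have "norm (L x \<phi>) \<le> norm (L x) * norm \<phi>" by (rule norm_blinfun)
        with elim show ?case
          by (auto simp: indicator_def mult.commute intro: order_trans[OF _ mult_left_mono])
      qed
    qed (use g in simp)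
    finally show ?thesis by simp
  qed
qed

lemma powr_tangent_le:
  fixes p t u :: real
  assumes p: "1 \<le> p" and t: "0 < t" and u: "0 \<le> u"
  shows "t powr p + p * t powr (p - 1) * (u - t) \<le> u powr p"
proof (cases "u = 0")
  case True
  have "t powr (p - 1) * t = t powr p" using t by (simp add: powr_diff)
  moreover have "t powr p \<le> p * t powr p" using p t by simp
  ultimately show ?thesis using True by (simp add: algebra_simps)
next
  case False
  have "p * t powr (p - 1) * (u - t) \<le> u powr p - t powr p"
  proof (rule convex_on_imp_above_tangent[OF powr_convex[OF p]])
    show "((\<lambda>x. x powr p) has_field_derivative p * t powr (p - 1)) (at t within {0<..})"
      using has_real_derivative_powr[OF t, of p] by (rule has_field_derivative_at_within)
  qed (use t u False in \<open>auto simp: interior_open\<close>)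
  then show ?thesis by simp
qed

lemma powr_le_if_rat_tangents_le:
  fixes x k p :: real
  assumes x: "0 < x"
    and tangents: "\<forall>t\<in>\<rat>. 0 < t \<longrightarrow> t powr p + p * t powr (p - 1) * (x - t) \<le> k"
  shows "x powr p \<le> k"
proof -
  obtain ts where ts: "\<And>n. ts n \<in> \<rat>" "ts \<longlonglongrightarrow> x"
    using closure_sequential[of x \<rat>] by (auto simp: Rats_closure_real)
  have "(\<lambda>n. ts n powr p + p * ts n powr (p - 1) * (x - ts n)) \<longlonglongrightarrow> x powr p + p * x powr (p - 1) * (x - x)"
    using x by (intro tendsto_intros ts(2)) auto
  moreover have "\<forall>\<^sub>F n in sequentially. ts n powr p + p * ts n powr (p - 1) * (x - ts n) \<le> k"
    using order_tendstoD(1)[OF ts(2) x] by eventually_elim (use tangents ts(1) in auto)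
  ultimately show ?thesis by (auto dest: tendsto_upperbound)
qed

locale measure_preserving_map = K: finite_measure K
  for K :: "'a measure" and N :: "'b measure" and \<rho> :: "'a \<Rightarrow> 'b" +
  assumes measurable_map [measurable]: "\<rho> \<in> K \<rightarrow>\<^sub>M N"
    and distr_eq: "distr K N \<rho> = N"

lemma measure_preserving_mapI:
  "finite_measure K \<Longrightarrow> \<rho> \<in> K \<rightarrow>\<^sub>M N \<Longrightarrow> distr K N \<rho> = N \<Longrightarrow> measure_preserving_map K N \<rho>"
  by (simp add: measure_preserving_map_def measure_preserving_map_axioms_def)

context measure_preserving_map
begin

sublocale N: finite_measure N
  using K.finite_measure_distr[OF measurable_map] by (simp add: distr_eq)

lemma emeasure_vimage: "E \<in> sets N \<Longrightarrow> emeasure K (\<rho> -` E \<inter> space K) = emeasure N E"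
  using emeasure_distr[OF measurable_map, of E] by (simp only: distr_eq)

lemma AE_vimage: "AE z in N. P z \<Longrightarrow> AE x in K. P (\<rho> x)"
  by (rule AE_distrD[OF measurable_map]) (simp only: distr_eq)

lemma integrable_comp:
  fixes h :: "'b \<Rightarrow> real"
  shows "integrable N h \<Longrightarrow> integrable K (\<lambda>x. h (\<rho> x))"
  by (rule integrable_distr[OF measurable_map]) (simp only: distr_eq)

lemma set_integral_comp:
  fixes h :: "'b \<Rightarrow> real"
  assumes [measurable]: "h \<in> borel_measurable N" "E \<in> sets N"
  shows "(\<integral>x\<in>\<rho> -` E \<inter> space K. h (\<rho> x) \<partial>K) = (\<integral>z\<in>E. h z \<partial>N)"
proof -
  have "(\<integral>x\<in>\<rho> -` E \<inter> space K. h (\<rho> x) \<partial>K) = (\<integral>x. indicator E (\<rho> x) * h (\<rho> x) \<partial>K)"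
    unfolding set_lebesgue_integral_def
    by (intro Bochner_Integration.integral_cong) (auto split: split_indicator)
  also have "\<dots> = (\<integral>z. indicator E z * h z \<partial>distr K N \<rho>)"
    by (rule integral_distr[symmetric]) measurable
  finally show ?thesis by (simp add: distr_eq set_lebesgue_integral_def)
qed

lemma finite_measure_completion: "finite_measure (completion K)"
  by (rule finite_measureI) simp

lemma measure_preserving_map_completion_domain: "measure_preserving_map (completion K) N \<rho>"
  using finite_measure_completion measurable_completion[OF measurable_map]
  by (rule measure_preserving_mapI) (simp only: distr_completion[OF measurable_map] distr_eq)

lemma measure_preserving_map_completion: "measure_preserving_map (completion K) (completion N) \<rho>"
proof (rule measure_preserving_mapI[OF finite_measure_completion])
  have \<rho>: "\<rho> \<in> completion K \<rightarrow>\<^sub>M N" by (rule measurable_completion[OF measurable_map])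
  have null: "null_sets (distr (completion K) N \<rho>) = null_sets N"
    by (simp only: distr_completion[OF measurable_map] distr_eq)
  show "\<rho> \<in> completion K \<rightarrow>\<^sub>M completion N"
    using null by (intro completion.measurable_completion2[OF \<rho>]) simp
  show "distr (completion K) (completion N) \<rho> = completion N"
    using completion.completion_distr_eq[OF \<rho> null] by (simp only: distr_completion[OF measurable_map] distr_eq)
qed

lemma absolutely_continuous_distr_density:
  assumes "f \<in> borel_measurable K"
  shows "absolutely_continuous N (distr (density K f) N \<rho>)"
  unfolding absolutely_continuous_def
proof
  fix E assume E: "E \<in> null_sets N"
  then have "\<rho> -` E \<inter> space K \<in> null_sets K"
    using emeasure_vimage[of E] by (auto simp: null_sets_def)
  then have "emeasure (distr (density K f) N \<rho>) E = 0"
    using E assms by (auto simp: emeasure_distr emeasure_density nn_integral_null_set)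
  with E show "E \<in> null_sets (distr (density K f) N \<rho>)"
    by (auto simp: null_sets_def)
qed

lemma ex_pushforward_density_nonneg:
  fixes f :: "'a \<Rightarrow> real"
  assumes f: "integrable K f" and nonneg: "\<And>x. 0 \<le> f x"
  shows "\<exists>g. integrable N g \<and> (\<forall>E\<in>sets N. (\<integral>z\<in>E. g z \<partial>N) = (\<integral>x\<in>\<rho> -` E \<inter> space K. f x \<partial>K))"
proof -
  have [measurable]: "f \<in> borel_measurable K" using f by (rule borel_measurable_integrable)
  define \<nu> where "\<nu> = distr (density K f) N \<rho>"
  have sets_\<nu>: "sets \<nu> = sets N" by (simp add: \<nu>_def)
  have \<nu>_nn: "emeasure \<nu> E = (\<integral>\<^sup>+x\<in>\<rho> -` E \<inter> space K. f x \<partial>K)" if "E \<in> sets N" for E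
    using that by (simp add: \<nu>_def emeasure_distr emeasure_density)
  have \<nu>: "emeasure \<nu> E = ennreal (\<integral>x\<in>\<rho> -` E \<inter> space K. f x \<partial>K)" if E: "E \<in> sets N" for E
    unfolding \<nu>_nn[OF E] using f nonneg E by (intro nn_set_integral_eq_set_integral) auto
  have "finite_measure \<nu>"
    using \<nu>[of "space N"] by (intro finite_measureI) (simp add: \<nu>_def)
  moreover have "absolutely_continuous N \<nu>"
    unfolding \<nu>_def by (rule absolutely_continuous_distr_density) measurable
  ultimately obtain D where D [measurable]: "D \<in> borel_measurable N"
    and RN: "AE z in N. RN_deriv N \<nu> z = ennreal (D z)" and D_nonneg: "\<And>z. 0 \<le> D z"
    using N.real_RN_deriv[OF _ _ sets_\<nu>] by metis
  have density_D: "(\<integral>\<^sup>+z\<in>E. D z \<partial>N) = emeasure \<nu> E" if "E \<in> sets N" for E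
  proof -
    have "emeasure \<nu> E = emeasure (density N (RN_deriv N \<nu>)) E"
      using N.density_RN_deriv[OF \<open>absolutely_continuous N \<nu>\<close> sets_\<nu>] by simp
    also have "\<dots> = (\<integral>\<^sup>+z\<in>E. D z \<partial>N)"
      using that RN by (auto simp: emeasure_density intro!: nn_integral_cong_AE)
    finally show ?thesis by simp
  qed
  have "integrable N D"
    using density_D[of "space N"] \<nu>[of "space N"] D_nonneg
    by (intro integrableI_nonneg) auto
  moreover have "(\<integral>z\<in>E. D z \<partial>N) = (\<integral>x\<in>\<rho> -` E \<inter> space K. f x \<partial>K)" if E: "E \<in> sets N" for E
  proof -
    have "ennreal (\<integral>z\<in>E. D z \<partial>N) = ennreal (\<integral>x\<in>\<rho> -` E \<inter> space K. f x \<partial>K)"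
      using density_D[OF E] \<nu>[OF E] nn_set_integral_eq_set_integral[OF \<open>integrable N D\<close> _ E] D_nonneg
      by simp
    moreover have "0 \<le> (\<integral>z\<in>E. D z \<partial>N)" "0 \<le> (\<integral>x\<in>\<rho> -` E \<inter> space K. f x \<partial>K)"
      unfolding set_lebesgue_integral_def using D_nonneg nonneg
      by (auto intro!: integral_nonneg_AE split: split_indicator)
    ultimately show ?thesis by simp
  qed
  ultimately show ?thesis by blast
qed

lemma ex_pushforward_density:
  fixes f :: "'a \<Rightarrow> real"
  assumes f: "integrable K f"
  shows "\<exists>g. integrable N g \<and> (\<forall>E\<in>sets N. (\<integral>z\<in>E. g z \<partial>N) = (\<integral>x\<in>\<rho> -` E \<inter> space K. f x \<partial>K))"
proof -
  have int_pos: "integrable K (\<lambda>x. max (f x) 0)" and int_neg: "integrable K (\<lambda>x. max (- f x) 0)"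
    using f by (auto intro: integrable_max)
  obtain g1 where g1: "integrable N g1"
    "\<And>E. E \<in> sets N \<Longrightarrow> (\<integral>z\<in>E. g1 z \<partial>N) = (\<integral>x\<in>\<rho> -` E \<inter> space K. max (f x) 0 \<partial>K)"
    using ex_pushforward_density_nonneg[OF int_pos] by auto
  obtain g2 where g2: "integrable N g2"
    "\<And>E. E \<in> sets N \<Longrightarrow> (\<integral>z\<in>E. g2 z \<partial>N) = (\<integral>x\<in>\<rho> -` E \<inter> space K. max (- f x) 0 \<partial>K)"
    using ex_pushforward_density_nonneg[OF int_neg] by auto
  have "(\<integral>z\<in>E. g1 z - g2 z \<partial>N) = (\<integral>x\<in>\<rho> -` E \<inter> space K. f x \<partial>K)" if E: "E \<in> sets N" for E
  proof -
    have E': "\<rho> -` E \<inter> space K \<in> sets K" using E by measurable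
    have "(\<integral>z\<in>E. g1 z - g2 z \<partial>N) = (\<integral>z\<in>E. g1 z \<partial>N) - (\<integral>z\<in>E. g2 z \<partial>N)"
      using g1 g2 E by (intro set_integral_diff integrable_set_integrable)
    also have "\<dots> = (\<integral>x\<in>\<rho> -` E \<inter> space K. max (f x) 0 - max (- f x) 0 \<partial>K)"
      using g1 g2 E int_pos int_neg E' by (simp add: integrable_set_integrable)
    also have "(\<lambda>x. max (f x) 0 - max (- f x) 0) = f" by (auto simp: max_def)
    finally show ?thesis .
  qed
  with g1 g2 show ?thesis by (intro exI[of _ "\<lambda>z. g1 z - g2 z"]) auto
qed

text \<open>For non-integrable \<open>f\<close> it is some unspecified integrable function.\<close>

definition pushforward_density :: "('a \<Rightarrow> real) \<Rightarrow> 'b \<Rightarrow> real" where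
  "pushforward_density f = (SOME g. integrable N g \<and> (integrable K f \<longrightarrow>
     (\<forall>E\<in>sets N. (\<integral>z\<in>E. g z \<partial>N) = (\<integral>x\<in>\<rho> -` E \<inter> space K. f x \<partial>K))))"

lemma integrable_pushforward_density: "integrable N (pushforward_density f)"
  and set_integral_pushforward_density: "integrable K f \<Longrightarrow> E \<in> sets N \<Longrightarrow>
    (\<integral>z\<in>E. pushforward_density f z \<partial>N) = (\<integral>x\<in>\<rho> -` E \<inter> space K. f x \<partial>K)"
proof -
  have "\<exists>g. integrable N g \<and> (integrable K f \<longrightarrow>
     (\<forall>E\<in>sets N. (\<integral>z\<in>E. g z \<partial>N) = (\<integral>x\<in>\<rho> -` E \<inter> space K. f x \<partial>K)))"
    using ex_pushforward_density[of f] by (cases "integrable K f") auto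
  from someI_ex[OF this] show "integrable N (pushforward_density f)"
    and "integrable K f \<Longrightarrow> E \<in> sets N \<Longrightarrow>
      (\<integral>z\<in>E. pushforward_density f z \<partial>N) = (\<integral>x\<in>\<rho> -` E \<inter> space K. f x \<partial>K)"
    unfolding pushforward_density_def by auto
qed

lemma borel_measurable_pushforward_density [measurable]:
  "pushforward_density f \<in> borel_measurable N"
  using integrable_pushforward_density by (rule borel_measurable_integrable)

lemma AE_pushforward_density_eq:
  assumes f: "integrable K f" and h: "integrable N h"
    and eq: "\<And>E. E \<in> sets N \<Longrightarrow> (\<integral>z\<in>E. h z \<partial>N) = (\<integral>x\<in>\<rho> -` E \<inter> space K. f x \<partial>K)"
  shows "AE z in N. pushforward_density f z = h z"
  using integrable_pushforward_density h
  by (rule density_unique_real) (simp add: eq set_integral_pushforward_density[OF f])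

lemma AE_pushforward_density_lincomb:
  assumes f: "integrable K f" and g: "integrable K g"
  shows "AE z in N. pushforward_density (\<lambda>x. \<alpha> * f x + \<beta> * g x) z
    = \<alpha> * pushforward_density f z + \<beta> * pushforward_density g z"
proof (rule AE_pushforward_density_eq)
  show "integrable K (\<lambda>x. \<alpha> * f x + \<beta> * g x)" using f g by simp
  show "integrable N (\<lambda>z. \<alpha> * pushforward_density f z + \<beta> * pushforward_density g z)"
    using integrable_pushforward_density by simp
  fix E assume E: "E \<in> sets N"
  then have E': "\<rho> -` E \<inter> space K \<in> sets K" by measurable
  show "(\<integral>z\<in>E. \<alpha> * pushforward_density f z + \<beta> * pushforward_density g z \<partial>N)
    = (\<integral>x\<in>\<rho> -` E \<inter> space K. \<alpha> * f x + \<beta> * g x \<partial>K)"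
    using f g E E' integrable_pushforward_density
    by (simp add: integrable_set_integrable set_integral_pushforward_density)
qed

lemma AE_pushforward_density_const: "AE z in N. pushforward_density (\<lambda>_. c) z = c"
proof (rule AE_pushforward_density_eq)
  fix E assume E: "E \<in> sets N"
  then have "\<rho> -` E \<inter> space K \<in> sets K" by measurable
  with E show "(\<integral>z\<in>E. c \<partial>N) = (\<integral>x\<in>\<rho> -` E \<inter> space K. c \<partial>K)"
    by (simp add: set_integral_const measure_def emeasure_vimage)
qed simp_all

lemma AE_pushforward_density_mono:
  assumes f: "integrable K f" and g: "integrable K g" and le: "\<And>x. x \<in> space K \<Longrightarrow> f x \<le> g x"
  shows "AE z in N. pushforward_density f z \<le> pushforward_density g z"
proof (rule AE_le_if_set_integral_le[OF integrable_pushforward_density integrable_pushforward_density])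
  fix E assume E: "E \<in> sets N"
  then have E': "\<rho> -` E \<inter> space K \<in> sets K" by measurable
  have "(\<integral>x\<in>\<rho> -` E \<inter> space K. f x \<partial>K) \<le> (\<integral>x\<in>\<rho> -` E \<inter> space K. g x \<partial>K)"
    using f g E' le by (intro set_integral_mono integrable_set_integrable) auto
  with f g E show "(\<integral>z\<in>E. pushforward_density f z \<partial>N) \<le> (\<integral>z\<in>E. pushforward_density g z \<partial>N)"
    by (simp add: set_integral_pushforward_density)
qed

lemma AE_abs_pushforward_density_le:
  assumes f: "integrable K f" and g: "integrable K g" and le: "\<And>x. x \<in> space K \<Longrightarrow> \<bar>f x\<bar> \<le> g x"
  shows "AE z in N. \<bar>pushforward_density f z\<bar> \<le> pushforward_density g z"
proof -
  have "AE z in N. pushforward_density f z \<le> pushforward_density g z"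
    using f g le by (intro AE_pushforward_density_mono) (auto simp: abs_le_iff)
  moreover have "AE z in N. pushforward_density (\<lambda>x. (-1) * f x + 0 * f x) z \<le> pushforward_density g z"
    using f g le by (intro AE_pushforward_density_mono) (auto simp: abs_le_iff)
  moreover note AE_pushforward_density_lincomb[OF f f, of "-1" 0]
  ultimately show ?thesis by eventually_elim auto
qed

lemma AE_pushforward_density_nonneg:
  assumes f: "integrable K f" and nonneg: "\<And>x. x \<in> space K \<Longrightarrow> 0 \<le> f x"
  shows "AE z in N. 0 \<le> pushforward_density f z"
proof -
  have "AE z in N. pushforward_density (\<lambda>_. 0) z \<le> pushforward_density f z"
    using f nonneg by (intro AE_pushforward_density_mono) auto
  with AE_pushforward_density_const[of 0] show ?thesis by eventually_elim auto
qed

text \<open>Jensen's inequality, through the tangent lines of \<open>x powr p\<close> at rational points.\<close>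

lemma AE_powr_pushforward_density_le:
  fixes f :: "'a \<Rightarrow> real"
  assumes p: "1 \<le> p" and f: "integrable K f" and nonneg: "\<And>x. x \<in> space K \<Longrightarrow> 0 \<le> f x"
    and fp: "integrable K (\<lambda>x. f x powr p)"
  shows "AE z in N. 0 < pushforward_density f z \<longrightarrow>
    pushforward_density f z powr p \<le> pushforward_density (\<lambda>x. f x powr p) z"
proof -
  let ?g = "pushforward_density f" and ?k = "pushforward_density (\<lambda>x. f x powr p)"
  define c where "c t = p * t powr (p - 1)" for t :: real
  have tangent: "AE z in N. t powr p + c t * (?g z - t) \<le> ?k z" if t: "0 < t" for t
  proof -
    have "(t powr p - c t * t) * 1 + c t * f x \<le> f x powr p" if "x \<in> space K" for x
      using powr_tangent_le[OF p t nonneg[OF that]] by (simp add: c_def algebra_simps)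
    then have "AE z in N. pushforward_density (\<lambda>x. (t powr p - c t * t) * 1 + c t * f x) z \<le> ?k z"
      using f fp by (intro AE_pushforward_density_mono) auto
    moreover have "AE z in N. pushforward_density (\<lambda>x. (t powr p - c t * t) * 1 + c t * f x) z
      = (t powr p - c t * t) * pushforward_density (\<lambda>_. 1) z + c t * ?g z"
      using f by (intro AE_pushforward_density_lincomb) auto
    moreover note AE_pushforward_density_const[of 1]
    ultimately show ?thesis by eventually_elim (auto simp: algebra_simps)
  qed
  have "AE z in N. \<forall>t\<in>\<rat>. 0 < t \<longrightarrow> t powr p + c t * (?g z - t) \<le> ?k z"
  proof (intro AE_ball_countable' countable_rat)
    show "AE z in N. 0 < t \<longrightarrow> t powr p + c t * (?g z - t) \<le> ?k z" for t
      using tangent[of t] by (cases "0 < t") auto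
  qed
  then show ?thesis
    by eventually_elim (auto simp: c_def intro: powr_le_if_rat_tangents_le)
qed

lemma integrable_powr_pushforward_density:
  assumes p: "1 \<le> p" and f: "integrable K f" and nonneg: "\<And>x. x \<in> space K \<Longrightarrow> 0 \<le> f x"
    and fp: "integrable K (\<lambda>x. f x powr p)"
  shows "integrable N (\<lambda>z. pushforward_density f z powr p)"
proof (rule Bochner_Integration.integrable_bound)
  show "integrable N (pushforward_density (\<lambda>x. f x powr p))"
    by (rule integrable_pushforward_density)
  show "AE z in N. norm (pushforward_density f z powr p) \<le> norm (pushforward_density (\<lambda>x. f x powr p) z)"
  proof -
    have "AE z in N. 0 \<le> pushforward_density f z"
      using f nonneg by (rule AE_pushforward_density_nonneg)
    moreover have "AE z in N. 0 < pushforward_density f z \<longrightarrow>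
        pushforward_density f z powr p \<le> pushforward_density (\<lambda>x. f x powr p) z"
      using p f nonneg fp by (rule AE_powr_pushforward_density_le)
    ultimately show ?thesis
    proof eventually_elim
      case (elim z)
      then show ?case by (cases "pushforward_density f z = 0") auto
    qed
  qed
qed measurable

lemma AE_comp_eq_if_set_integral_eq:
  fixes f :: "'a \<Rightarrow> real" and h :: "'b \<Rightarrow> real"
  assumes generated: "\<And>A. A \<in> sets K \<Longrightarrow> \<exists>E\<in>sets N. AE x in K. x \<in> A \<longleftrightarrow> \<rho> x \<in> E"
    and f: "integrable K f" and h: "integrable N h"
    and eq: "\<And>E. E \<in> sets N \<Longrightarrow> (\<integral>z\<in>E. h z \<partial>N) = (\<integral>x\<in>\<rho> -` E \<inter> space K. f x \<partial>K)"
  shows "AE x in K. h (\<rho> x) = f x"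
proof (rule density_unique_real[OF integrable_comp[OF h] f])
  have [measurable]: "h \<in> borel_measurable N" "f \<in> borel_measurable K"
    using f h by (simp_all add: borel_measurable_integrable)
  fix A assume A [measurable]: "A \<in> sets K"
  then obtain E where E [measurable]: "E \<in> sets N" and AE_E: "AE x in K. x \<in> A \<longleftrightarrow> \<rho> x \<in> E"
    using generated by blast
  have AE_A: "AE x in K. x \<in> \<rho> -` E \<inter> space K \<longleftrightarrow> x \<in> A"
    using AE_E AE_space by eventually_elim auto
  have "(\<integral>x\<in>A. h (\<rho> x) \<partial>K) = (\<integral>x\<in>\<rho> -` E \<inter> space K. h (\<rho> x) \<partial>K)"
    using AE_A by (intro set_integral_cong_set) (auto simp: set_borel_measurable_def)
  also have "\<dots> = (\<integral>x\<in>\<rho> -` E \<inter> space K. f x \<partial>K)"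
    by (simp add: set_integral_comp eq)
  also have "\<dots> = (\<integral>x\<in>A. f x \<partial>K)"
    using AE_A by (intro set_integral_cong_set[symmetric]) (auto simp: set_borel_measurable_def)
  finally show "(\<integral>x\<in>A. h (\<rho> x) \<partial>K) = (\<integral>x\<in>A. f x \<partial>K)" .
qed

lemma AE_pushforward_density_blinfun_apply_le:
  fixes U :: "'a \<Rightarrow> 'p::real_normed_vector \<Rightarrow>\<^sub>L real"
  assumes U: "\<And>\<phi>. (\<lambda>x. U x \<phi>) \<in> borel_measurable K" and u: "integrable K u"
    and bound: "\<And>x. x \<in> space K \<Longrightarrow> norm (U x) \<le> u x"
  shows "AE z in N. \<bar>s * pushforward_density (\<lambda>x. U x a) z + t * pushforward_density (\<lambda>x. U x b) z
      - pushforward_density (\<lambda>x. U x c) z\<bar> \<le> pushforward_density u z * norm (s *\<^sub>R a + t *\<^sub>R b - c)"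
proof -
  define \<phi> where "\<phi> = s *\<^sub>R a + t *\<^sub>R b - c"
  have U_int: "integrable K (\<lambda>x. U x \<psi>)" for \<psi>
    using U u bound by (intro integrable_blinfun_apply AE_I2) auto
  have st: "integrable K (\<lambda>x. s * U x a + t * U x b)" using U_int by simp
  have "AE z in N. \<bar>pushforward_density (\<lambda>x. 1 * (s * U x a + t * U x b) + (-1) * U x c) z\<bar>
      \<le> pushforward_density (\<lambda>x. norm \<phi> * u x + 0 * u x) z"
  proof (rule AE_abs_pushforward_density_le)
    show "integrable K (\<lambda>x. 1 * (s * U x a + t * U x b) + (-1) * U x c)" using st U_int by simp
    show "integrable K (\<lambda>x. norm \<phi> * u x + 0 * u x)" using u by simp
    fix x assume x: "x \<in> space K"
    have "1 * (s * U x a + t * U x b) + (-1) * U x c = U x \<phi>"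
      by (simp add: \<phi>_def blinfun.add_right blinfun.diff_right blinfun.scaleR_right)
    also have "\<bar>U x \<phi>\<bar> \<le> norm (U x) * norm \<phi>" using norm_blinfun[of "U x" \<phi>] by simp
    also have "\<dots> \<le> u x * norm \<phi>" using bound[OF x] by (intro mult_right_mono) auto
    finally show "\<bar>1 * (s * U x a + t * U x b) + (-1) * U x c\<bar> \<le> norm \<phi> * u x + 0 * u x"
      by (simp add: mult.commute)
  qed
  moreover have "AE z in N. pushforward_density (\<lambda>x. 1 * (s * U x a + t * U x b) + (-1) * U x c) z
      = 1 * pushforward_density (\<lambda>x. s * U x a + t * U x b) z + (-1) * pushforward_density (\<lambda>x. U x c) z"
    using st U_int by (rule AE_pushforward_density_lincomb)
  moreover have "AE z in N. pushforward_density (\<lambda>x. s * U x a + t * U x b) z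
      = s * pushforward_density (\<lambda>x. U x a) z + t * pushforward_density (\<lambda>x. U x b) z"
    using U_int U_int by (rule AE_pushforward_density_lincomb)
  moreover have "AE z in N. pushforward_density (\<lambda>x. norm \<phi> * u x + 0 * u x) z
      = norm \<phi> * pushforward_density u z + 0 * pushforward_density u z"
    using u u by (rule AE_pushforward_density_lincomb)
  ultimately show ?thesis unfolding \<phi>_def by eventually_elim (simp add: mult.commute)
qed

lemma ex_pushforward_blinfun:
  fixes U :: "'a \<Rightarrow> 'p::{real_normed_vector,second_countable_topology} \<Rightarrow>\<^sub>L real"
  assumes U: "\<And>\<phi>. (\<lambda>x. U x \<phi>) \<in> borel_measurable K" and u: "integrable K u"
    and bound: "\<And>x. x \<in> space K \<Longrightarrow> norm (U x) \<le> u x"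
  obtains V :: "'b \<Rightarrow> 'p \<Rightarrow>\<^sub>L real"
  where "\<And>\<phi>. (\<lambda>z. V z \<phi>) \<in> borel_measurable N" "AE z in N. norm (V z) \<le> pushforward_density u z"
    "\<And>\<phi> E. E \<in> sets N \<Longrightarrow> (\<integral>z\<in>E. V z \<phi> \<partial>N) = (\<integral>x\<in>\<rho> -` E \<inter> space K. U x \<phi> \<partial>K)"
proof -
  obtain D :: "'p set" where D: "countable D" "closure D = UNIV" by (rule ex_countable_dense)
  have "AE z in N. 0 \<le> pushforward_density u z \<and>
      rat_lincomb_bounded D (pushforward_density u z) (\<lambda>a. pushforward_density (\<lambda>x. U x a) z)"
    unfolding rat_lincomb_bounded_def using u bound
    by (intro eventually_conj AE_pushforward_density_nonneg AE_ball_countable' countable_rat D(1)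
        AE_pushforward_density_blinfun_apply_le[OF U u bound]) (auto intro: order_trans[OF norm_ge_zero])
  then obtain V :: "'b \<Rightarrow> 'p \<Rightarrow>\<^sub>L real" where V [measurable]: "\<And>\<phi>. (\<lambda>z. V z \<phi>) \<in> borel_measurable N"
    and V_bound: "AE z in N. norm (V z) \<le> pushforward_density u z"
    and V_D: "\<And>a. a \<in> D \<Longrightarrow> AE z in N. V z a = pushforward_density (\<lambda>x. U x a) z"
    by (rule ex_blinfun_AE_extension[OF D(2) borel_measurable_pushforward_density]) blast
  have "(\<lambda>\<phi>. \<integral>z\<in>E. V z \<phi> \<partial>N) = (\<lambda>\<phi>. \<integral>x\<in>\<rho> -` E \<inter> space K. U x \<phi> \<partial>K)" if E: "E \<in> sets N" for E
  proof (rule bounded_linear_eq_on_dense[OF D(2)])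
    have E': "\<rho> -` E \<inter> space K \<in> sets K" using E by measurable
    show "bounded_linear (\<lambda>\<phi>. \<integral>z\<in>E. V z \<phi> \<partial>N)"
      by (rule bounded_linear_set_integral_blinfun_apply[OF V integrable_pushforward_density V_bound E])
    show "bounded_linear (\<lambda>\<phi>. \<integral>x\<in>\<rho> -` E \<inter> space K. U x \<phi> \<partial>K)"
      using U u bound E' by (intro bounded_linear_set_integral_blinfun_apply AE_I2) auto
    fix a assume a: "a \<in> D"
    have "(\<integral>z\<in>E. V z a \<partial>N) = (\<integral>z\<in>E. pushforward_density (\<lambda>x. U x a) z \<partial>N)"
      using V_D[OF a] E by (intro set_lebesgue_integral_cong_AE) (auto elim: eventually_mono)
    also have "\<dots> = (\<integral>x\<in>\<rho> -` E \<inter> space K. U x a \<partial>K)"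
      using U u bound E by (intro set_integral_pushforward_density integrable_blinfun_apply AE_I2) auto
    finally show "(\<integral>z\<in>E. V z a \<partial>N) = (\<integral>x\<in>\<rho> -` E \<inter> space K. U x a \<partial>K)" .
  qed
  with V V_bound show thesis by (intro that) (auto dest: fun_cong)
qed

end

section \<open>Products and completions\<close>

lemma measure_preserving_map_pair:
  assumes f: "measure_preserving_map M1 M1' f" and g: "measure_preserving_map M2 M2' g"
  shows "measure_preserving_map (M1 \<Otimes>\<^sub>M M2) (M1' \<Otimes>\<^sub>M M2') (map_prod f g)"
proof -
  interpret f: measure_preserving_map M1 M1' f by fact
  interpret g: measure_preserving_map M2 M2' g by fact
  have map_prod_eq: "map_prod f g = (\<lambda>(x, y). (f x, g y))" by (auto simp: fun_eq_iff)
  show ?thesis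
  proof (rule measure_preserving_mapI)
    show "finite_measure (M1 \<Otimes>\<^sub>M M2)"
      using finite_measure_pair_measure[OF g.K.finite_measure_axioms f.K.finite_measure_axioms] .
    show "map_prod f g \<in> M1 \<Otimes>\<^sub>M M2 \<rightarrow>\<^sub>M M1' \<Otimes>\<^sub>M M2'" unfolding map_prod_eq by measurable
    have "sigma_finite_measure (distr M2 M2' g)"
      by (simp only: g.distr_eq) (rule g.N.sigma_finite_measure_axioms)
    from pair_measure_distr[OF f.measurable_map g.measurable_map this]
    show "distr (M1 \<Otimes>\<^sub>M M2) (M1' \<Otimes>\<^sub>M M2') (map_prod f g) = M1' \<Otimes>\<^sub>M M2'"
      by (simp only: f.distr_eq g.distr_eq map_prod_eq)
  qed
qed

lemma measure_preserving_map_swap: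
  assumes "finite_measure M1" "finite_measure M2"
  shows "measure_preserving_map (M1 \<Otimes>\<^sub>M M2) (M2 \<Otimes>\<^sub>M M1) prod.swap"
proof -
  interpret M1: finite_measure M1 by fact
  interpret M2: finite_measure M2 by fact
  interpret pair_sigma_finite M2 M1 by standard
  have swap_eq: "prod.swap = (\<lambda>(x, y). (y, x))" by (auto simp: fun_eq_iff)
  show ?thesis
  proof (rule measure_preserving_mapI)
    show "finite_measure (M1 \<Otimes>\<^sub>M M2)" using finite_measure_pair_measure[OF assms(2,1)] .
    show "prod.swap \<in> M1 \<Otimes>\<^sub>M M2 \<rightarrow>\<^sub>M M2 \<Otimes>\<^sub>M M1" unfolding swap_eq by measurable
    show "distr (M1 \<Otimes>\<^sub>M M2) (M2 \<Otimes>\<^sub>M M1) prod.swap = M2 \<Otimes>\<^sub>M M1"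
      unfolding swap_eq by (rule distr_pair_swap[symmetric])
  qed
qed

lemma sets_pair_measure_vimage:
  assumes f: "f \<in> M1 \<rightarrow>\<^sub>M M1'" and g: "g \<in> M2 \<rightarrow>\<^sub>M M2'"
    and f_sets: "\<And>B. B \<in> sets M1 \<Longrightarrow> \<exists>A\<in>sets M1'. B = f -` A \<inter> space M1"
    and g_sets: "\<And>B. B \<in> sets M2 \<Longrightarrow> \<exists>A\<in>sets M2'. B = g -` A \<inter> space M2"
  shows "sets (M1 \<Otimes>\<^sub>M M2) = {map_prod f g -` E \<inter> space (M1 \<Otimes>\<^sub>M M2) | E. E \<in> sets (M1' \<Otimes>\<^sub>M M2')}"
proof -
  let ?\<Omega> = "space M1 \<times> space M2" and ?\<Omega>' = "space M1' \<times> space M2'"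
  let ?rect' = "{a \<times> b | a b. a \<in> sets M1' \<and> b \<in> sets M2'}"
  have vimage_Times: "map_prod f g -` (A1 \<times> A2) \<inter> ?\<Omega> = (f -` A1 \<inter> space M1) \<times> (g -` A2 \<inter> space M2)"
    for A1 A2 by auto
  have rect: "{a \<times> b | a b. a \<in> sets M1 \<and> b \<in> sets M2} = {map_prod f g -` R \<inter> ?\<Omega> | R. R \<in> ?rect'}"
  proof (intro equalityI subsetI)
    fix X assume "X \<in> {a \<times> b | a b. a \<in> sets M1 \<and> b \<in> sets M2}"
    then obtain a b where X: "X = a \<times> b" "a \<in> sets M1" "b \<in> sets M2" by blast
    obtain A1 A2 where A: "A1 \<in> sets M1'" "A2 \<in> sets M2'"
      and ab: "a = f -` A1 \<inter> space M1" "b = g -` A2 \<inter> space M2"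
      using f_sets[OF X(2)] g_sets[OF X(3)] by blast
    have "X = map_prod f g -` (A1 \<times> A2) \<inter> ?\<Omega>" unfolding vimage_Times X(1) ab ..
    with A show "X \<in> {map_prod f g -` R \<inter> ?\<Omega> | R. R \<in> ?rect'}" by blast
  next
    fix X assume "X \<in> {map_prod f g -` R \<inter> ?\<Omega> | R. R \<in> ?rect'}"
    then obtain A1 A2 where "X = map_prod f g -` (A1 \<times> A2) \<inter> ?\<Omega>" "A1 \<in> sets M1'" "A2 \<in> sets M2'"
      by blast
    then show "X \<in> {a \<times> b | a b. a \<in> sets M1 \<and> b \<in> sets M2}"
      unfolding vimage_Times using measurable_sets[OF f] measurable_sets[OF g] by blast
  qed
  have "map_prod f g \<in> ?\<Omega> \<rightarrow> ?\<Omega>'"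
    using measurable_space[OF f] measurable_space[OF g] by auto
  then show ?thesis
    unfolding sets_pair_measure space_pair_measure rect
    by (rule sigma_sets_vimage_commute[symmetric])
qed

lemma AE_completion_vimage:
  assumes sets_vimage: "\<And>B. B \<in> sets K \<Longrightarrow> \<exists>E\<in>sets N. B = \<rho> -` E \<inter> space K"
    and A: "A \<in> sets (completion K)"
  shows "\<exists>E\<in>sets N. AE x in completion K. x \<in> A \<longleftrightarrow> \<rho> x \<in> E"
proof -
  obtain E where E: "E \<in> sets N" "main_part K A = \<rho> -` E \<inter> space K"
    using sets_vimage[OF main_part_sets[OF A]] by blast
  have "AE x in completion K. x \<in> A \<longleftrightarrow> \<rho> x \<in> E"
    using AE_completion[OF AE_in_main_part[OF A]] AE_space
    by eventually_elim (auto simp: E(2))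
  with E(1) show ?thesis by blast
qed

lemma sets_vimage_if_embedding:
  assumes "embedding M M' \<tau>" and B: "B \<in> sets M"
  shows "\<exists>A\<in>sets M'. B = \<tau> -` A \<inter> space M"
proof -
  obtain S where bij: "bij_betw \<tau> (space M) S"
    and image_sets: "\<forall>B\<in>sets M. \<exists>A\<in>sets M'. \<tau> ` B = A \<inter> S \<and> emeasure M B = emeasure M' A"
    using assms(1) unfolding embedding_def by auto
  then have inj: "inj_on \<tau> (space M)" and img: "\<tau> ` space M = S" by (auto simp: bij_betw_def)
  obtain A where A: "A \<in> sets M'" "\<tau> ` B = A \<inter> S" using image_sets B by auto
  have "B \<subseteq> space M" using B by (rule sets.sets_into_space)
  then have "B = \<tau> -` A \<inter> space M"
    using A(2) img inj by (auto simp: inj_on_image_mem_iff[OF inj, symmetric])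
  with A(1) show ?thesis by blast
qed

lemma ex_vimage_AE_eq_if_embedding:
  assumes emb: "embedding M M' \<tau>" and A: "A \<in> sets (completion (M \<Otimes>\<^sub>M M))"
  shows "\<exists>E\<in>sets (M' \<Otimes>\<^sub>M M'). AE x in completion (M \<Otimes>\<^sub>M M). x \<in> A \<longleftrightarrow> map_prod \<tau> \<tau> x \<in> E"
proof (rule AE_completion_vimage[OF _ A])
  have \<tau>: "\<tau> \<in> M \<rightarrow>\<^sub>M M'" using emb by (simp add: embedding_def meas_pres_def)
  fix B assume "B \<in> sets (M \<Otimes>\<^sub>M M)"
  then show "\<exists>E\<in>sets (M' \<Otimes>\<^sub>M M'). B = map_prod \<tau> \<tau> -` E \<inter> space (M \<Otimes>\<^sub>M M)"
    using sets_pair_measure_vimage[OF \<tau> \<tau> sets_vimage_if_embedding[OF emb] sets_vimage_if_embedding[OF emb]]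
    by blast
qed

section \<open>Pushforward of a graphon\<close>

lemma measure_preserving_map_if_meas_pres:
  assumes "prob_space M" and "meas_pres M M' \<tau>"
  shows "measure_preserving_map M M' \<tau>"
proof (rule measure_preserving_mapI)
  show "finite_measure M" using assms(1) by (rule prob_space.finite_measure)
  show \<tau>: "\<tau> \<in> M \<rightarrow>\<^sub>M M'" using assms(2) by (simp add: meas_pres_def)
  show "distr M M' \<tau> = M'"
    using assms(2) by (intro measure_eqI) (auto simp: meas_pres_def emeasure_distr[OF \<tau>])
qed

lemma ZgraphonD:
  assumes "Zgraphon M W"
  shows "x \<in> space M \<Longrightarrow> y \<in> space M \<Longrightarrow> W x y = W y x"
    and "(\<lambda>z. W (fst z) (snd z) \<phi>) \<in> borel_measurable (completion (M \<Otimes>\<^sub>M M))"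
    and "1 \<le> p \<Longrightarrow> integrable (completion (M \<Otimes>\<^sub>M M)) (\<lambda>z. norm (W (fst z) (snd z)) powr p)"
    and "integrable (completion (M \<Otimes>\<^sub>M M)) (\<lambda>z. norm (W (fst z) (snd z)))"
proof -
  show "x \<in> space M \<Longrightarrow> y \<in> space M \<Longrightarrow> W x y = W y x"
    and "(\<lambda>z. W (fst z) (snd z) \<phi>) \<in> borel_measurable (completion (M \<Otimes>\<^sub>M M))"
    and powr: "1 \<le> p \<Longrightarrow> integrable (completion (M \<Otimes>\<^sub>M M)) (\<lambda>z. norm (W (fst z) (snd z)) powr p)"
    for p using assms by (auto simp: Zgraphon_def)
  from powr[of 1] show "integrable (completion (M \<Otimes>\<^sub>M M)) (\<lambda>z. norm (W (fst z) (snd z)))"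
    by simp
qed

lemma integrable_powr_norm_symmetrize:
  fixes V :: "'b \<times> 'b \<Rightarrow> 'p::{banach,second_countable_topology} \<Rightarrow>\<^sub>L real"
  assumes M: "prob_space M" and V [measurable]: "\<And>\<phi>. (\<lambda>z. V z \<phi>) \<in> borel_measurable (M \<Otimes>\<^sub>M M)"
    and p: "1 \<le> p" and g: "integrable (M \<Otimes>\<^sub>M M) (\<lambda>z. g z powr p)"
    and bound: "AE z in M \<Otimes>\<^sub>M M. norm (V z) \<le> g z"
  shows "integrable (M \<Otimes>\<^sub>M M) (\<lambda>z. norm ((1/2::real) *\<^sub>R (V z + V (prod.swap z))) powr p)"
proof (rule Bochner_Integration.integrable_bound)
  interpret M: prob_space M by fact
  interpret swap: measure_preserving_map "M \<Otimes>\<^sub>M M" "M \<Otimes>\<^sub>M M" prod.swap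
    by (intro measure_preserving_map_swap M.finite_measure_axioms)
  show "integrable (M \<Otimes>\<^sub>M M) (\<lambda>z. g z powr p + g (prod.swap z) powr p)"
    using g swap.integrable_comp[OF g] by simp
  have "(\<lambda>z. V (prod.swap z) \<phi>) \<in> borel_measurable (M \<Otimes>\<^sub>M M)" for \<phi>
    using measurable_compose[OF swap.measurable_map V] .
  then show "(\<lambda>z. norm ((1/2::real) *\<^sub>R (V z + V (prod.swap z))) powr p) \<in> borel_measurable (M \<Otimes>\<^sub>M M)"
    by (intro powr_real_measurable borel_measurable_norm_blinfun)
       (auto simp: scaleR_blinfun.rep_eq plus_blinfun.rep_eq)
  show "AE z in M \<Otimes>\<^sub>M M. norm (norm ((1/2::real) *\<^sub>R (V z + V (prod.swap z))) powr p)
      \<le> norm (g z powr p + g (prod.swap z) powr p)"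
    using bound swap.AE_vimage[OF bound]
  proof eventually_elim
    case (elim z)
    have "norm ((1/2::real) *\<^sub>R (V z + V (prod.swap z))) \<le> (norm (V z) + norm (V (prod.swap z))) / 2"
      using norm_triangle_ineq[of "V z" "V (prod.swap z)"] by simp
    also have "\<dots> \<le> max (g z) (g (prod.swap z))" using elim by simp
    finally have "norm ((1/2::real) *\<^sub>R (V z + V (prod.swap z))) powr p \<le> max (g z) (g (prod.swap z)) powr p"
      using p by (intro powr_mono2) auto
    also have "\<dots> \<le> g z powr p + g (prod.swap z) powr p" by (simp add: max_def)
    finally show ?case by simp
  qed
qed

lemma strong_Zgraphon_symmetrize:
  fixes V :: "'b \<times> 'b \<Rightarrow> 'p::{banach,second_countable_topology} \<Rightarrow>\<^sub>L real"
  assumes M: "prob_space M" and V [measurable]: "\<And>\<phi>. (\<lambda>z. V z \<phi>) \<in> borel_measurable (M \<Otimes>\<^sub>M M)"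
    and g: "\<And>p. 1 \<le> p \<Longrightarrow> integrable (M \<Otimes>\<^sub>M M) (\<lambda>z. g z powr p)"
    and bound: "AE z in M \<Otimes>\<^sub>M M. norm (V z) \<le> g z"
  shows "strong_Zgraphon M (\<lambda>x y. (1/2::real) *\<^sub>R (V (x, y) + V (y, x)))"
    (is "strong_Zgraphon M ?W")
proof -
  interpret M: prob_space M by fact
  interpret swap: measure_preserving_map "M \<Otimes>\<^sub>M M" "M \<Otimes>\<^sub>M M" prod.swap
    by (intro measure_preserving_map_swap M.finite_measure_axioms)
  have W_eq: "?W (fst z) (snd z) = (1/2::real) *\<^sub>R (V z + V (prod.swap z))" for z
    by (cases z) simp
  have W_meas: "(\<lambda>z. ?W (fst z) (snd z) \<phi>) \<in> borel_measurable (M \<Otimes>\<^sub>M M)" for \<phi>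
    unfolding W_eq using measurable_compose[OF swap.measurable_map V]
    by (simp add: scaleR_blinfun.rep_eq plus_blinfun.rep_eq)
  have norm_meas: "(\<lambda>z. norm (?W (fst z) (snd z))) \<in> borel_measurable (M \<Otimes>\<^sub>M M)"
    by (rule borel_measurable_norm_blinfun[OF W_meas])
  show ?thesis
    unfolding strong_Zgraphon_def Zgraphon_def
  proof (intro conjI allI impI ballI)
    show "?W x y = ?W y x" for x y by (simp only: add.commute)
    show "(\<lambda>z. ?W (fst z) (snd z) \<phi>) \<in> borel_measurable (M \<Otimes>\<^sub>M M)" for \<phi> by (rule W_meas)
    then show "(\<lambda>z. ?W (fst z) (snd z) \<phi>) \<in> borel_measurable (completion (M \<Otimes>\<^sub>M M))" for \<phi>
      by (rule measurable_completion)
    show "(\<lambda>z. norm (?W (fst z) (snd z))) \<in> borel_measurable (completion (M \<Otimes>\<^sub>M M))"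
      using norm_meas by (rule measurable_completion)
    show "integrable (completion (M \<Otimes>\<^sub>M M)) (\<lambda>z. norm (?W (fst z) (snd z)) powr p)" if "1 \<le> p" for p
    proof -
      have "(\<lambda>z. norm (?W (fst z) (snd z)) powr p) \<in> borel_measurable (M \<Otimes>\<^sub>M M)"
        using norm_meas by (intro powr_real_measurable) auto
      with integrable_powr_norm_symmetrize[OF M V that g[OF that] bound] show ?thesis
        by (simp add: W_eq integrable_completion prod.swap_def)
    qed
  qed
qed

locale Zgraphon_pushforward = M: prob_space M + M': prob_space M'
  for M :: "'a measure" and M' :: "'b measure" and \<tau> :: "'a \<Rightarrow> 'b"
    and W :: "'a \<Rightarrow> 'a \<Rightarrow> 'p::{banach,second_countable_topology} \<Rightarrow>\<^sub>L real"
    and V :: "'b \<times> 'b \<Rightarrow> 'p \<Rightarrow>\<^sub>L real" and g :: "'b \<times> 'b \<Rightarrow> real" +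
  assumes meas_pres: "meas_pres M M' \<tau>"
    and Zgraphon: "Zgraphon M W"
    and measurable_V [measurable]: "\<And>\<phi>. (\<lambda>z. V z \<phi>) \<in> borel_measurable (M' \<Otimes>\<^sub>M M')"
    and integrable_g: "integrable (M' \<Otimes>\<^sub>M M') g"
    and integrable_powr_g: "\<And>p. 1 \<le> p \<Longrightarrow> integrable (M' \<Otimes>\<^sub>M M') (\<lambda>z. g z powr p)"
    and norm_V_le: "AE z in M' \<Otimes>\<^sub>M M'. norm (V z) \<le> g z"
    and set_integral_V: "\<And>E \<phi>. E \<in> sets (M' \<Otimes>\<^sub>M M') \<Longrightarrow> (\<integral>z\<in>E. V z \<phi> \<partial>(M' \<Otimes>\<^sub>M M'))
      = (\<integral>x\<in>map_prod \<tau> \<tau> -` E \<inter> space (M \<Otimes>\<^sub>M M). W (fst x) (snd x) \<phi> \<partial>completion (M \<Otimes>\<^sub>M M))"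
begin

text \<open>\<open>V\<close> need not be symmetric; averaging it with its reflection does not change its integrals
  over rectangles because \<open>W\<close> is symmetric.\<close>

definition pushforward_graphon :: "'b \<Rightarrow> 'b \<Rightarrow> 'p \<Rightarrow>\<^sub>L real" where
  "pushforward_graphon x y = (1/2::real) *\<^sub>R (V (x, y) + V (y, x))"

lemma strong_Zgraphon_pushforward_graphon: "strong_Zgraphon M' pushforward_graphon"
  unfolding pushforward_graphon_def
  by (rule strong_Zgraphon_symmetrize[OF M'.prob_space_axioms measurable_V integrable_powr_g norm_V_le])

lemma borel_measurable_W [measurable]:
  "(\<lambda>z. W (fst z) (snd z) \<phi>) \<in> borel_measurable (completion (M \<Otimes>\<^sub>M M))"
  using Zgraphon by (rule ZgraphonD(2))

lemma integrable_V: "integrable (M' \<Otimes>\<^sub>M M') (\<lambda>z. V z \<phi>)"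
  by (rule integrable_blinfun_apply[OF measurable_V integrable_g norm_V_le])

lemma set_integral_V_Times:
  assumes "A1 \<in> sets M'" "A2 \<in> sets M'"
  shows "(\<integral>z\<in>A1 \<times> A2. V z \<phi> \<partial>(M' \<Otimes>\<^sub>M M'))
    = (\<integral>x\<in>(\<tau> -` A1 \<inter> space M) \<times> (\<tau> -` A2 \<inter> space M). W (fst x) (snd x) \<phi> \<partial>completion (M \<Otimes>\<^sub>M M))"
proof -
  have "map_prod \<tau> \<tau> -` (A1 \<times> A2) \<inter> space (M \<Otimes>\<^sub>M M) = (\<tau> -` A1 \<inter> space M) \<times> (\<tau> -` A2 \<inter> space M)"
    by (auto simp: space_pair_measure)
  then show ?thesis using set_integral_V[of "A1 \<times> A2"] assms by simp
qed

lemma set_integral_pushforward_graphon: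
  assumes A1: "A1 \<in> sets M'" and A2: "A2 \<in> sets M'"
  shows "(\<integral>z\<in>A1 \<times> A2. pushforward_graphon (fst z) (snd z) \<phi> \<partial>(M' \<Otimes>\<^sub>M M'))
    = (\<integral>x\<in>(\<tau> -` A1 \<inter> space M) \<times> (\<tau> -` A2 \<inter> space M). W (fst x) (snd x) \<phi> \<partial>completion (M \<Otimes>\<^sub>M M))"
    (is "_ = (\<integral>x\<in>?B1 \<times> ?B2. _ \<partial>?K)")
proof -
  let ?N = "M' \<Otimes>\<^sub>M M'"
  interpret swap_N: measure_preserving_map ?N ?N prod.swap
    by (intro measure_preserving_map_swap M'.finite_measure_axioms)
  interpret swap_K: measure_preserving_map ?K ?K prod.swap
    by (intro measure_preserving_map.measure_preserving_map_completion measure_preserving_map_swap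
        M.finite_measure_axioms)
  have \<tau> [measurable]: "\<tau> \<in> M \<rightarrow>\<^sub>M M'" using meas_pres by (simp add: meas_pres_def)
  have sets_Times [measurable]: "A1 \<times> A2 \<in> sets ?N" "A2 \<times> A1 \<in> sets ?N" using A1 A2 by auto
  have V_int: "set_integrable ?N (A1 \<times> A2) (\<lambda>z. V z \<phi>)" "set_integrable ?N (A1 \<times> A2) (\<lambda>z. V (prod.swap z) \<phi>)"
    using integrable_V swap_N.integrable_comp[OF integrable_V] by (auto intro: integrable_set_integrable)
  have swap_N: "prod.swap -` (A2 \<times> A1) \<inter> space ?N = A1 \<times> A2"
    using sets.sets_into_space[OF A1] sets.sets_into_space[OF A2] by (auto simp: space_pair_measure)
  have swap_K: "prod.swap -` (?B2 \<times> ?B1) \<inter> space ?K = ?B1 \<times> ?B2"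
    by (auto simp: space_pair_measure)
  have B_sets: "?B2 \<times> ?B1 \<in> sets ?K" "?B1 \<times> ?B2 \<in> sets ?K"
    using measurable_sets[OF \<tau> A1] measurable_sets[OF \<tau> A2] by (auto intro: sets_completionI_sets pair_measureI)
  have "pushforward_graphon (fst z) (snd z) \<phi> = 1/2 * (V z \<phi> + V (prod.swap z) \<phi>)" for z
    by (cases z) (simp add: pushforward_graphon_def scaleR_blinfun.rep_eq plus_blinfun.rep_eq)
  then have "(\<integral>z\<in>A1 \<times> A2. pushforward_graphon (fst z) (snd z) \<phi> \<partial>?N)
      = 1/2 * ((\<integral>z\<in>A1 \<times> A2. V z \<phi> \<partial>?N) + (\<integral>z\<in>A1 \<times> A2. V (prod.swap z) \<phi> \<partial>?N))"
    by (simp only: set_integral_mult_right set_integral_add(2)[OF V_int])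
  also have "(\<integral>z\<in>A1 \<times> A2. V (prod.swap z) \<phi> \<partial>?N) = (\<integral>z\<in>A2 \<times> A1. V z \<phi> \<partial>?N)"
    using swap_N.set_integral_comp[of "\<lambda>z. V z \<phi>" "A2 \<times> A1"] by (simp only: swap_N) simp
  also have "\<dots> = (\<integral>x\<in>?B2 \<times> ?B1. W (fst x) (snd x) \<phi> \<partial>?K)"
    by (rule set_integral_V_Times[OF A2 A1])
  also have "\<dots> = (\<integral>x\<in>?B1 \<times> ?B2. W (snd x) (fst x) \<phi> \<partial>?K)"
    using swap_K.set_integral_comp[of "\<lambda>z. W (fst z) (snd z) \<phi>" "?B2 \<times> ?B1"] by (simp only: swap_K) (simp add: B_sets(1))
  also have "\<dots> = (\<integral>x\<in>?B1 \<times> ?B2. W (fst x) (snd x) \<phi> \<partial>?K)"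
    using ZgraphonD(1)[OF Zgraphon] B_sets(2) by (intro set_lebesgue_integral_cong) auto
  finally show ?thesis using set_integral_V_Times[OF A1 A2] by simp
qed

lemma AE_V_comp_eq:
  assumes emb: "embedding M M' \<tau>"
  shows "AE x in M \<Otimes>\<^sub>M M. V (map_prod \<tau> \<tau> x) = W (fst x) (snd x)"
proof -
  let ?K = "completion (M \<Otimes>\<^sub>M M)" and ?N = "M' \<Otimes>\<^sub>M M'"
  have \<tau>: "measure_preserving_map M M' \<tau>"
    using M.prob_space_axioms meas_pres by (rule measure_preserving_map_if_meas_pres)
  interpret \<rho>: measure_preserving_map ?K ?N "map_prod \<tau> \<tau>"
    by (intro measure_preserving_map.measure_preserving_map_completion_domain measure_preserving_map_pair \<tau>)
  obtain D :: "'p set" where D: "countable D" "closure D = UNIV" by (rule ex_countable_dense)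
  have "AE x in ?K. \<forall>d\<in>D. V (map_prod \<tau> \<tau> x) d = W (fst x) (snd x) d"
  proof (intro AE_ball_countable' D(1) \<rho>.AE_comp_eq_if_set_integral_eq integrable_V)
    show "\<exists>E\<in>sets ?N. AE x in ?K. x \<in> A \<longleftrightarrow> map_prod \<tau> \<tau> x \<in> E" if "A \<in> sets ?K" for A
      using emb that by (rule ex_vimage_AE_eq_if_embedding)
    show "integrable ?K (\<lambda>x. W (fst x) (snd x) d)" for d
      using ZgraphonD(4)[OF Zgraphon] by (intro integrable_blinfun_apply AE_I2) auto
    show "(\<integral>z\<in>E. V z d \<partial>?N) = (\<integral>x\<in>map_prod \<tau> \<tau> -` E \<inter> space ?K. W (fst x) (snd x) d \<partial>?K)"
      if "E \<in> sets ?N" for E d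
      using set_integral_V[OF that] by simp
  qed
  then show ?thesis
    unfolding AE_completion_iff
  proof eventually_elim
    case (elim x)
    have "blinfun_apply (V (map_prod \<tau> \<tau> x)) = blinfun_apply (W (fst x) (snd x))"
      using elim by (intro bounded_linear_eq_on_dense[OF D(2)] blinfun.bounded_linear_right) auto
    then show ?case by (simp add: blinfun_apply_inject)
  qed
qed

lemma AE_pushforward_graphon_comp_eq:
  assumes "embedding M M' \<tau>"
  shows "AE z in M \<Otimes>\<^sub>M M. pushforward_graphon (\<tau> (fst z)) (\<tau> (snd z)) = W (fst z) (snd z)"
proof -
  interpret swap: measure_preserving_map "M \<Otimes>\<^sub>M M" "M \<Otimes>\<^sub>M M" prod.swap
    by (intro measure_preserving_map_swap M.finite_measure_axioms)
  note AE_V = AE_V_comp_eq[OF assms]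
  with swap.AE_vimage[OF AE_V] AE_space show ?thesis
  proof eventually_elim
    case (elim z)
    then have "W (snd z) (fst z) = W (fst z) (snd z)"
      using ZgraphonD(1)[OF Zgraphon] by (auto simp: space_pair_measure)
    with elim show ?case by (cases z) (simp add: pushforward_graphon_def scaleR_2[symmetric])
  qed
qed

end

theorem mainTheorem5:
  fixes M :: "'a measure" and M' :: "'b measure" and \<tau> :: "'a \<Rightarrow> 'b"
    and W :: "'a \<Rightarrow> 'a \<Rightarrow> ('p::{banach,second_countable_topology} \<Rightarrow>\<^sub>L real)"
  assumes "prob_space M" and "prob_space M'"
    and "meas_pres M M' \<tau>"
    and "Zgraphon M W"
  shows "\<exists>W' :: 'b \<Rightarrow> 'b \<Rightarrow> ('p \<Rightarrow>\<^sub>L real).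
           strong_Zgraphon M' W' \<and>
           (\<forall>A1\<in>sets M'. \<forall>A2\<in>sets M'. \<forall>\<phi>.
              set_lebesgue_integral (M' \<Otimes>\<^sub>M M') (A1 \<times> A2)
                 (\<lambda>z. blinfun_apply (W' (fst z) (snd z)) \<phi>)
            = set_lebesgue_integral (completion (M \<Otimes>\<^sub>M M))
                 ((\<tau> -` A1 \<inter> space M) \<times> (\<tau> -` A2 \<inter> space M))
                 (\<lambda>z. blinfun_apply (W (fst z) (snd z)) \<phi>)) \<and>
           (embedding M M' \<tau> \<longrightarrow>
              (AE z in M \<Otimes>\<^sub>M M. W' (\<tau> (fst z)) (\<tau> (snd z)) = W (fst z) (snd z)))"
proof -
  let ?K = "completion (M \<Otimes>\<^sub>M M)" and ?u = "\<lambda>z. norm (W (fst z) (snd z))"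
  have \<tau>: "measure_preserving_map M M' \<tau>"
    using assms(1,3) by (rule measure_preserving_map_if_meas_pres)
  interpret \<rho>: measure_preserving_map ?K "M' \<Otimes>\<^sub>M M'" "map_prod \<tau> \<tau>"
    by (intro measure_preserving_map.measure_preserving_map_completion_domain measure_preserving_map_pair \<tau>)
  note W_meas = ZgraphonD(2)[OF assms(4)] and norm_W_powr = ZgraphonD(3)[OF assms(4)]
    and norm_W = ZgraphonD(4)[OF assms(4)]
  obtain V :: "'b \<times> 'b \<Rightarrow> 'p \<Rightarrow>\<^sub>L real" where V: "\<And>\<phi>. (\<lambda>z. V z \<phi>) \<in> borel_measurable (M' \<Otimes>\<^sub>M M')"
    "AE z in M' \<Otimes>\<^sub>M M'. norm (V z) \<le> \<rho>.pushforward_density ?u z"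
    "\<And>\<phi> E. E \<in> sets (M' \<Otimes>\<^sub>M M') \<Longrightarrow> (\<integral>z\<in>E. V z \<phi> \<partial>(M' \<Otimes>\<^sub>M M'))
      = (\<integral>x\<in>map_prod \<tau> \<tau> -` E \<inter> space ?K. W (fst x) (snd x) \<phi> \<partial>?K)"
    by (rule \<rho>.ex_pushforward_blinfun[OF W_meas norm_W]) blast+
  interpret Zgraphon_pushforward M M' \<tau> W V "\<rho>.pushforward_density ?u"
  proof (intro Zgraphon_pushforward.intro Zgraphon_pushforward_axioms.intro assms V)
    show "integrable (M' \<Otimes>\<^sub>M M') (\<lambda>z. \<rho>.pushforward_density ?u z powr p)" if p: "1 \<le> p" for p
      using \<rho>.integrable_powr_pushforward_density[of p ?u] p norm_W norm_W_powr by simp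
  qed (use V(3) \<rho>.integrable_pushforward_density in simp_all)
  show ?thesis
    by (intro exI[of _ pushforward_graphon] conjI ballI allI impI strong_Zgraphon_pushforward_graphon
        set_integral_pushforward_graphon AE_pushforward_graphon_comp_eq)
qed

end
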